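(* Let $w$ be a partial permutation and $i\in\mathbb Z$ such that $w(i)$, $w(i+1)$ and $w(i+2)$ are defined and exactly one of $\overline i,\overline{i+1}$ lies in $R(w)$. Then there exists a unique partial permutation $w'$ connected to $w$ by a Knuth move such that $R(w')$ contains the other of $\overline i,\overline{i+1}$ and not the first one.
   Context: Fix $n\ge1$; $\overline i=i+n\mathbb Z$. A partial permutation is an injection $w:U\to\mathbb Z$, where $U\subseteq\mathbb Z$ satisfies $x\in U\iff x+n\in U$ and $w(i+n)=w(i)+n$. Its right descent set is $R(w)=\{\overline i: w(i)>w(i+1)\}$ (over $i$ with $w(i),w(i+1)$ defined). Two partial permutations $w,w'$ are connected by a Knuth move at position $\overline j$ if $w'(t)=w(t+1)$ and $w'(t+1)=w(t)$ for all $t\equiv j\pmod n$, $w'(t)=w(t)$ for all $t\not\equiv j,j+1\pmod n$, and at least one of $w(j+2),w(j-1)$ lies numerically between $w(j)$ and $w(j+1)$. *)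

theory Defs
  imports Main
begin

text \<open>A partial permutation (with period n) is modelled as a partial map
  w :: int => int option; its domain U is dom w.  Residue classes i + nZ are
  represented by their canonical representatives i mod n.\<close>

definition partial_perm :: "int \<Rightarrow> (int \<Rightarrow> int option) \<Rightarrow> bool" where
  "partial_perm n w \<longleftrightarrow>
     (\<forall>x. x \<in> dom w \<longleftrightarrow> x + n \<in> dom w) \<and>
     inj_on w (dom w) \<and>
     (\<forall>i v. w i = Some v \<longrightarrow> w (i + n) = Some (v + n))"

definition right_descents :: "int \<Rightarrow> (int \<Rightarrow> int option) \<Rightarrow> int set" where
  "right_descents n w =
     {i mod n | i a b. w i = Some a \<and> w (i + 1) = Some b \<and> a > b}"

definition strictly_between :: "int \<Rightarrow> int \<Rightarrow> int \<Rightarrow> bool" where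
  "strictly_between a b c \<longleftrightarrow> min a b < c \<and> c < max a b"

definition knuth_move ::
  "int \<Rightarrow> (int \<Rightarrow> int option) \<Rightarrow> (int \<Rightarrow> int option) \<Rightarrow> int \<Rightarrow> bool" where
  "knuth_move n w w' j \<longleftrightarrow>
     (\<forall>t. t mod n = j mod n \<longrightarrow> w' t = w (t + 1) \<and> w' (t + 1) = w t) \<and>
     (\<forall>t. t mod n \<noteq> j mod n \<and> t mod n \<noteq> (j + 1) mod n \<longrightarrow> w' t = w t) \<and>
     (\<exists>a b. w j = Some a \<and> w (j + 1) = Some b \<and>
        ((\<exists>c. w (j + 2) = Some c \<and> strictly_between a b c) \<or>
         (\<exists>c. w (j - 1) = Some c \<and> strictly_between a b c)))"

definition knuth_connected ::
  "int \<Rightarrow> (int \<Rightarrow> int option) \<Rightarrow> (int \<Rightarrow> int option) \<Rightarrow> bool" where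
  "knuth_connected n w w' \<longleftrightarrow> (\<exists>j. knuth_move n w w' j)"

end

theory Submission
  imports Defs
begin

text \<open>A Knuth move at position j replaces w by w \<circ> \<sigma>, where \<sigma> is the periodic transposition
  of the residue classes of j and j + 1. Write a, b, c for the values of w at i, i + 1, i + 2.
  A descent at i followed by an ascent at i + 1 means that b is the smallest of the three; the
  move at i + 1 (if a < c, witnessed by a) or at i (if c < a, witnessed by c) then moves the
  descent one step to the right. Every other move fixes i + 1 and so fixes i or i + 2 as well,
  leaving one of the two descent bits unchanged, except for the wrap-around when n \<le> 3, which
  is checked by hand. The mirror case follows from the symmetry v \<mapsto> (t \<mapsto> - v (- t)), which
  preserves partial permutations and Knuth moves and exchanges descents at t and - t - 1.\<close>

lemma partial_perm_add_period:
  assumes "partial_perm n w"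
  shows "w (t + n) = map_option (\<lambda>v. v + n) (w t)"
proof (cases "w t")
  case None
  then have "t + n \<notin> dom w"
    using assms unfolding partial_perm_def by blast
  with None show ?thesis by auto
qed (use assms in \<open>auto simp: partial_perm_def\<close>)

lemma partial_perm_add_multiple_period:
  assumes "partial_perm n w"
  shows "w (t + k * n) = map_option (\<lambda>v. v + k * n) (w t)"
proof (induction k rule: int_induct[where k = 0])
  case base
  then show ?case by (simp add: option.map_ident)
next
  case (step1 k)
  have "w (t + (k + 1) * n) = map_option (\<lambda>v. v + n) (w (t + k * n))"
    using partial_perm_add_period[OF assms, of "t + k * n"] by (simp add: algebra_simps)
  with step1 show ?case
    by (simp add: option.map_comp o_def algebra_simps)
next
  case (step2 k)
  have "w (t + k * n) = map_option (\<lambda>v. v + n) (w (t + (k - 1) * n))"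
    using partial_perm_add_period[OF assms, of "t + (k - 1) * n"] by (simp add: algebra_simps)
  with step2 show ?case
    by (cases "w t") (auto simp: algebra_simps)
qed

lemma partial_perm_cong_mod:
  assumes "partial_perm n w" "t' mod n = t mod n"
  shows "w t' = map_option (\<lambda>v. v + (t' - t)) (w t)"
proof -
  obtain k where "t' - t = k * n"
    using assms(2) by (metis mod_eq_dvd_iff dvd_def mult.commute)
  then show ?thesis
    using partial_perm_add_multiple_period[OF assms(1), of t k] by (simp add: algebra_simps)
qed

lemma right_descents_iff:
  assumes "partial_perm n w"
  shows "i mod n \<in> right_descents n w \<longleftrightarrow> (\<exists>a b. w i = Some a \<and> w (i + 1) = Some b \<and> b < a)"
proof
  assume "i mod n \<in> right_descents n w"
  then obtain k a b where k: "i mod n = k mod n" "w k = Some a" "w (k + 1) = Some b" "b < a"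
    unfolding right_descents_def by blast
  have "(i + 1) mod n = (k + 1) mod n"
    using k(1) by (metis mod_add_left_eq)
  from partial_perm_cong_mod[OF assms k(1)] partial_perm_cong_mod[OF assms this] k(2,3)
  have "w i = Some (a + (i - k))" "w (i + 1) = Some (b + (i - k))"
    by simp_all
  with k(4) show "\<exists>a b. w i = Some a \<and> w (i + 1) = Some b \<and> b < a" by auto
qed (auto simp: right_descents_def)

definition knuth_swap :: "int \<Rightarrow> int \<Rightarrow> int \<Rightarrow> int" where
  "knuth_swap n j t =
     (if t mod n = j mod n then t + 1 else if t mod n = (j + 1) mod n then t - 1 else t)"

definition knuth_witness :: "(int \<Rightarrow> int option) \<Rightarrow> int \<Rightarrow> bool" where
  "knuth_witness w j \<longleftrightarrow> (\<exists>a b. w j = Some a \<and> w (j + 1) = Some b \<and>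
     ((\<exists>c. w (j + 2) = Some c \<and> strictly_between a b c) \<or>
      (\<exists>c. w (j - 1) = Some c \<and> strictly_between a b c)))"

lemma mod_add_cancel_right: "((x::int) + c) mod n = (y + c) mod n \<longleftrightarrow> x mod n = y mod n"
  by (simp add: mod_eq_dvd_iff)

lemma succ_mod_neq:
  assumes "n \<ge> 2"
  shows "((x::int) + 1) mod n \<noteq> x mod n"
proof
  assume "(x + 1) mod n = x mod n"
  then have "n dvd 1" by (simp add: mod_eq_dvd_iff)
  with assms show False by (auto simp: zdvd1_eq)
qed

lemma knuth_swap_add_period: "knuth_swap n j (t + n) = knuth_swap n j t + n"
  unfolding knuth_swap_def by simp

lemma knuth_swap_cong_mod:
  assumes "j mod n = j' mod n"
  shows "knuth_swap n j = knuth_swap n j'"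
  using assms mod_add_cancel_right[of j 1 n j'] unfolding knuth_swap_def by (intro ext) simp

lemma knuth_swap_transposes:
  assumes "n \<ge> 2" "t mod n = j mod n"
  shows "knuth_swap n j t = t + 1" "knuth_swap n j (t + 1) = t"
proof -
  have "(t + 1) mod n = (j + 1) mod n"
    using assms(2) mod_add_cancel_right by blast
  moreover have "(t + 1) mod n \<noteq> j mod n"
    using assms succ_mod_neq[OF assms(1), of t] by simp
  ultimately show "knuth_swap n j t = t + 1" "knuth_swap n j (t + 1) = t"
    using assms(2) unfolding knuth_swap_def by simp_all
qed

lemma knuth_swap_involution:
  assumes "n \<ge> 2"
  shows "knuth_swap n j (knuth_swap n j t) = t"
proof -
  consider "t mod n = j mod n" | "(t - 1) mod n = j mod n" "t mod n \<noteq> j mod n"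
    | "t mod n \<noteq> j mod n" "t mod n \<noteq> (j + 1) mod n"
    using mod_add_cancel_right[of "t - 1" 1 n j] by force
  then show ?thesis
  proof cases
    case 3
    then show ?thesis unfolding knuth_swap_def by simp
  qed (use knuth_swap_transposes[OF assms] in \<open>metis diff_add_cancel\<close>)+
qed

lemma partial_perm_comp_knuth_swap:
  assumes "n \<ge> 2" "partial_perm n w"
  shows "partial_perm n (w \<circ> knuth_swap n j)"
proof -
  have "inj_on (w \<circ> knuth_swap n j) (dom (w \<circ> knuth_swap n j))"
  proof (rule inj_onI)
    fix x y
    assume "x \<in> dom (w \<circ> knuth_swap n j)" "y \<in> dom (w \<circ> knuth_swap n j)"
      and "(w \<circ> knuth_swap n j) x = (w \<circ> knuth_swap n j) y"
    then have "knuth_swap n j x = knuth_swap n j y"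
      using assms(2) unfolding partial_perm_def by (auto dest: inj_onD)
    then show "x = y"
      by (metis knuth_swap_involution[OF assms(1)])
  qed
  then show ?thesis
    using assms(2) unfolding partial_perm_def by (simp add: knuth_swap_add_period dom_def)
qed

lemma knuth_move_iff:
  assumes "n \<ge> 2"
  shows "knuth_move n w w' j \<longleftrightarrow> w' = w \<circ> knuth_swap n j \<and> knuth_witness w j"
proof
  assume move: "knuth_move n w w' j"
  have "w' t = w (knuth_swap n j t)" for t
  proof -
    consider "t mod n = j mod n" | "(t - 1) mod n = j mod n" "t mod n \<noteq> j mod n"
      | "t mod n \<noteq> j mod n" "t mod n \<noteq> (j + 1) mod n"
      using mod_add_cancel_right[of "t - 1" 1 n j] by force
    then show ?thesis
    proof cases
      case 1
      then show ?thesis using move knuth_swap_transposes[OF assms] unfolding knuth_move_def by simp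
    next
      case 2
      then show ?thesis using move knuth_swap_transposes[OF assms, of "t - 1" j]
        unfolding knuth_move_def by (metis diff_add_cancel)
    next
      case 3
      then show ?thesis using move unfolding knuth_move_def knuth_swap_def by simp
    qed
  qed
  with move show "w' = w \<circ> knuth_swap n j \<and> knuth_witness w j"
    unfolding knuth_move_def knuth_witness_def by auto
next
  assume "w' = w \<circ> knuth_swap n j \<and> knuth_witness w j"
  then show "knuth_move n w w' j"
    using knuth_swap_transposes[OF assms] unfolding knuth_move_def knuth_witness_def
    by (auto simp: knuth_swap_def)
qed

lemma knuth_witness_cong_mod:
  assumes "partial_perm n w" "j' mod n = j mod n" "knuth_witness w j"
  shows "knuth_witness w j'"
proof -
  have shift: "w (j' + x) = map_option (\<lambda>v. v + (j' - j)) (w (j + x))" for x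
    using partial_perm_cong_mod[OF assms(1), of "j' + x" "j + x"] assms(2)
      mod_add_cancel_right[of j' x n j] by (simp add: add.commute)
  have "strictly_between (a + k) (b + k) (c + k) \<longleftrightarrow> strictly_between a b c" for a b c k :: int
    unfolding strictly_between_def by auto
  with assms(3) shift[of 0] shift[of 1] shift[of 2] shift[of "-1"] show ?thesis
    unfolding knuth_witness_def by fastforce
qed

lemma knuth_connected_iff_offset:
  assumes "n \<ge> 2" "partial_perm n w"
  shows "knuth_connected n w w' \<longleftrightarrow>
    (\<exists>d. 0 \<le> d \<and> d < n \<and> w' = w \<circ> knuth_swap n (i + d) \<and> knuth_witness w (i + d))"
proof
  assume "knuth_connected n w w'"
  then obtain j where w': "w' = w \<circ> knuth_swap n j" and witness: "knuth_witness w j"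
    unfolding knuth_connected_def knuth_move_iff[OF assms(1)] by blast
  define d where "d = (j - i) mod n"
  have "0 \<le> d" "d < n"
    using assms(1) unfolding d_def by simp_all
  moreover have offset: "(i + d) mod n = j mod n"
    unfolding d_def by (simp add: mod_add_right_eq)
  ultimately show "\<exists>d. 0 \<le> d \<and> d < n \<and> w' = w \<circ> knuth_swap n (i + d) \<and> knuth_witness w (i + d)"
    using w' knuth_swap_cong_mod[OF offset] knuth_witness_cong_mod[OF assms(2) offset witness]
    by metis
qed (auto simp: knuth_connected_def knuth_move_iff[OF assms(1)])

lemma dvd_iff_small_multiple:
  assumes "(n::int) > 0" "-2 * n < x" "x < 2 * n"
  shows "n dvd x \<longleftrightarrow> x = -n \<or> x = 0 \<or> x = n"
proof
  assume "n dvd x"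
  then obtain k where k: "x = n * k" by blast
  have "-2 < k"
    using assms k mult_less_cancel_left_pos[of n "-2" k] by simp
  moreover have "k < 2"
    using assms k mult_less_cancel_left_pos[of n k 2] by (simp add: mult.commute)
  ultimately have "k = -1 \<or> k = 0 \<or> k = 1" by auto
  with k show "x = -n \<or> x = 0 \<or> x = n" by auto
qed auto

lemma knuth_swap_offset:
  assumes "n \<ge> 2" "0 \<le> d" "d < n"
  shows "knuth_swap n (i + d) i = (if d = 0 then i + 1 else if d = n - 1 then i - 1 else i)"
    and "knuth_swap n (i + d) (i + 1) = (if d = 1 then i + 2 else if d = 0 then i else i + 1)"
    and "knuth_swap n (i + d) (i + 2) =
      (if d = 2 \<or> (n = 2 \<and> d = 0) then i + 3 else if d = 1 then i + 1 else i + 2)"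
proof -
  have same_class: "(i + e) mod n = (i + d') mod n \<longleftrightarrow> e - d' = -n \<or> e = d' \<or> e - d' = n"
    if "0 \<le> e" "e \<le> 2" "0 \<le> d'" "d' \<le> n" for e d'
  proof -
    have "(i + e) mod n = (i + d') mod n \<longleftrightarrow> n dvd (e - d')"
      by (simp add: mod_eq_dvd_iff)
    also have "\<dots> \<longleftrightarrow> e - d' = -n \<or> e - d' = 0 \<or> e - d' = n"
      using assms that by (intro dvd_iff_small_multiple) auto
    finally show ?thesis by simp
  qed
  have "i mod n = (i + d) mod n \<longleftrightarrow> d = 0"
    using same_class[of 0 d] assms by simp
  moreover have "i mod n = (i + d + 1) mod n \<longleftrightarrow> d = n - 1"
    using same_class[of 0 "d + 1"] assms by (auto simp add: add.assoc)
  moreover have "(i + 1) mod n = (i + d) mod n \<longleftrightarrow> d = 1"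
    using same_class[of 1 d] assms by auto
  moreover have "(i + 1) mod n = (i + d + 1) mod n \<longleftrightarrow> d = 0"
    using same_class[of 1 "d + 1"] assms by (auto simp add: add.assoc)
  moreover have "(i + 2) mod n = (i + d) mod n \<longleftrightarrow> d = 2 \<or> (n = 2 \<and> d = 0)"
    using same_class[of 2 d] assms by auto
  moreover have "(i + 2) mod n = (i + d + 1) mod n \<longleftrightarrow> d = 1"
    using same_class[of 2 "d + 1"] assms by (auto simp add: add.assoc)
  ultimately show "knuth_swap n (i + d) i = (if d = 0 then i + 1 else if d = n - 1 then i - 1 else i)"
    and "knuth_swap n (i + d) (i + 1) = (if d = 1 then i + 2 else if d = 0 then i else i + 1)"
    and "knuth_swap n (i + d) (i + 2) =
      (if d = 2 \<or> (n = 2 \<and> d = 0) then i + 3 else if d = 1 then i + 1 else i + 2)"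
    unfolding knuth_swap_def by (simp_all add: add.commute[of 2 i])
qed

lemma ex1_knuth_connectedI:
  assumes "n \<ge> 2" "partial_perm n w"
    and "knuth_witness w (i + d\<^sub>0)" "P (w \<circ> knuth_swap n (i + d\<^sub>0))"
    and "\<And>d. 0 \<le> d \<Longrightarrow> d < n \<Longrightarrow> knuth_witness w (i + d) \<Longrightarrow>
      P (w \<circ> knuth_swap n (i + d)) \<Longrightarrow> d = d\<^sub>0"
  shows "\<exists>!w'. partial_perm n w' \<and> knuth_connected n w w' \<and> P w'"
proof (rule ex1I)
  show "partial_perm n (w \<circ> knuth_swap n (i + d\<^sub>0)) \<and>
      knuth_connected n w (w \<circ> knuth_swap n (i + d\<^sub>0)) \<and> P (w \<circ> knuth_swap n (i + d\<^sub>0))"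
    using assms partial_perm_comp_knuth_swap
    unfolding knuth_connected_def knuth_move_iff[OF assms(1)] by blast
next
  fix w' assume "partial_perm n w' \<and> knuth_connected n w w' \<and> P w'"
  then show "w' = w \<circ> knuth_swap n (i + d\<^sub>0)"
    using assms(5) unfolding knuth_connected_iff_offset[OF assms(1,2), of _ i] by blast
qed

lemma right_descents_comp_knuth_swap_iff:
  assumes "n \<ge> 2" "partial_perm n w" "s = t + 1"
  shows "t mod n \<in> right_descents n (w \<circ> knuth_swap n j) \<longleftrightarrow>
    (\<exists>x y. w (knuth_swap n j t) = Some x \<and> w (knuth_swap n j s) = Some y \<and> y < x)"
  using right_descents_iff[OF partial_perm_comp_knuth_swap[OF assms(1,2)]] assms(3) by simp

context
  fixes n i a b c :: int and w :: "int \<Rightarrow> int option"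
  assumes n_ge_2: "n \<ge> 2" and pp: "partial_perm n w"
    and window: "w i = Some a" "w (i + 1) = Some b" "w (i + 2) = Some c"
    and valley: "b < a" "b < c"
begin

private abbreviation "\<sigma> d \<equiv> knuth_swap n (i + d)"

lemma valley_descents_comp_knuth_swap_iff:
  shows "(i + 1) mod n \<in> right_descents n (w \<circ> \<sigma> d) \<longleftrightarrow>
      (\<exists>x y. w (\<sigma> d (i + 1)) = Some x \<and> w (\<sigma> d (i + 2)) = Some y \<and> y < x)"
    and "i mod n \<in> right_descents n (w \<circ> \<sigma> d) \<longleftrightarrow>
      (\<exists>x y. w (\<sigma> d i) = Some x \<and> w (\<sigma> d (i + 1)) = Some y \<and> y < x)"
  using right_descents_comp_knuth_swap_iff[OF n_ge_2 pp, of "i + 2" "i + 1"]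
    right_descents_comp_knuth_swap_iff[OF n_ge_2 pp, of "i + 1" i]
  by simp_all

lemma valley_ends_distinct: "a \<noteq> c"
  using pp window inj_onD[of w "dom w" i "i + 2"] unfolding partial_perm_def by auto

lemma valley_period_2:
  assumes "n = 2"
  shows "c = a + 2" "w (i - 1) = Some (b - 2)"
proof -
  have "(i + 2) mod n = i mod n" "(i - 1) mod n = (i + 1) mod n"
    using assms by (simp_all add: mod_eq_dvd_iff)
  from partial_perm_cong_mod[OF pp this(1)] partial_perm_cong_mod[OF pp this(2)]
  show "c = a + 2" "w (i - 1) = Some (b - 2)"
    using window by simp_all
qed

lemma valley_period_3:
  assumes "n = 3"
  shows "w (i + 3) = Some (a + 3)"
  using partial_perm_cong_mod[OF pp, of "i + 3" i] window assms by (simp add: mod_eq_dvd_iff)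

lemma valley_knuth_offset_unique:
  assumes "0 \<le> d" "d < n" "knuth_witness w (i + d)"
    and desc: "(i + 1) mod n \<in> right_descents n (w \<circ> \<sigma> d)"
    and asc: "i mod n \<notin> right_descents n (w \<circ> \<sigma> d)"
  shows "d = (if a < c then 1 else 0)"
proof -
  note \<sigma> = knuth_swap_offset[OF n_ge_2 assms(1,2), of i]
  have desc': "\<exists>x y. w (\<sigma> d (i + 1)) = Some x \<and> w (\<sigma> d (i + 2)) = Some y \<and> y < x"
    using desc valley_descents_comp_knuth_swap_iff by simp
  have asc': "\<not> (\<exists>x y. w (\<sigma> d i) = Some x \<and> w (\<sigma> d (i + 1)) = Some y \<and> y < x)"
    using asc valley_descents_comp_knuth_swap_iff by simp
  consider "d = 0" | "d = 1" | "d \<noteq> 0" "d \<noteq> 1" by blast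
  then show ?thesis
  proof cases
    case 1
    show ?thesis
    proof (cases "n = 2")
      case True
      \<comment> \<open>then the move at i has no witness: c = a + 2 and w (i - 1) = b - 2 lie outside (b, a)\<close>
      then show ?thesis
        using assms(3) 1 window valley valley_period_2
        by (auto simp: knuth_witness_def strictly_between_def)
    next
      case False
      then show ?thesis using desc' 1 \<sigma> window by auto
    qed
  next
    case 2
    have "a < c"
    proof (cases "n = 2")
      case True
      then show ?thesis using valley_period_2 by simp
    next
      case False
      then show ?thesis using asc' 2 \<sigma> window valley_ends_distinct by auto
    qed
    then show ?thesis using 2 by simp
  next
    case 3
    \<comment> \<open>such a move fixes i + 1, so it must move both i and i + 2, forcing n - 1 = d = 2\<close>
    then have fixed: "\<sigma> d (i + 1) = i + 1" using \<sigma> by simp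
    then have "\<sigma> d i \<noteq> i" using asc' window valley by auto
    then have "d = n - 1" using 3 \<sigma> by (auto split: if_splits)
    moreover have "\<sigma> d (i + 2) \<noteq> i + 2" using fixed desc' window valley by auto
    then have "d = 2" using 3 \<sigma> by (auto split: if_splits)
    ultimately have "n = 3" "\<sigma> d (i + 2) = i + 3" using \<sigma> by auto
    then show ?thesis using fixed desc' window valley valley_period_3 by auto
  qed
qed

lemma ex1_knuth_connected_valley:
  "\<exists>!w'. partial_perm n w' \<and> knuth_connected n w w' \<and>
     (i + 1) mod n \<in> right_descents n w' \<and> i mod n \<notin> right_descents n w'"
proof (rule ex1_knuth_connectedI[OF n_ge_2 pp, of i "if a < c then 1 else 0"])
  show "knuth_witness w (i + (if a < c then 1 else 0))"
  proof (cases "a < c")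
    case True
    have "w (i + 1 - 1) = Some a" "w (i + 1 + 1) = Some c"
      using window by (simp_all add: add.assoc)
    with True show ?thesis
      using window valley by (auto simp: knuth_witness_def strictly_between_def)
  next
    case False
    with valley_ends_distinct show ?thesis
      using window valley by (auto simp: knuth_witness_def strictly_between_def)
  qed
  show "(i + 1) mod n \<in> right_descents n (w \<circ> \<sigma> (if a < c then 1 else 0)) \<and>
      i mod n \<notin> right_descents n (w \<circ> \<sigma> (if a < c then 1 else 0))"
  proof (cases "a < c")
    case True
    have "\<sigma> 1 i = (if n = 2 then i - 1 else i)" "\<sigma> 1 (i + 1) = i + 2" "\<sigma> 1 (i + 2) = i + 1"
      using knuth_swap_offset[OF n_ge_2, of 1 i] n_ge_2 by simp_all
    with True show ?thesis
      unfolding valley_descents_comp_knuth_swap_iff using window valley valley_period_2 by auto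
  next
    case False
    then have "n \<noteq> 2" using valley_period_2 by auto
    then have "\<sigma> 0 i = i + 1" "\<sigma> 0 (i + 1) = i" "\<sigma> 0 (i + 2) = i + 2"
      using knuth_swap_offset[OF n_ge_2, of 0 i] n_ge_2 by simp_all
    with False valley_ends_distinct show ?thesis
      unfolding valley_descents_comp_knuth_swap_iff using window valley by auto
  qed
qed (use valley_knuth_offset_unique in blast)

end

lemma ex1_knuth_connected_descent_right:
  assumes "n \<ge> 2" "partial_perm n w" "i + 2 \<in> dom w"
    and "i mod n \<in> right_descents n w" "(i + 1) mod n \<notin> right_descents n w"
  shows "\<exists>!w'. partial_perm n w' \<and> knuth_connected n w w' \<and>
    (i + 1) mod n \<in> right_descents n w' \<and> i mod n \<notin> right_descents n w'"
proof -
  obtain a b where ab: "w i = Some a" "w (i + 1) = Some b" "b < a"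
    using assms(4) right_descents_iff[OF assms(2)] by blast
  obtain c where c: "w (i + 2) = Some c"
    using assms(3) by blast
  have "b \<noteq> c"
    using assms(2) ab c inj_onD[of w "dom w" "i + 1" "i + 2"] unfolding partial_perm_def by auto
  with ab c assms(5) have "b < c"
    using right_descents_iff[OF assms(2), of "i + 1"] by (auto simp: add.commute[of 2 i])
  with ab c show ?thesis
    using ex1_knuth_connected_valley[OF assms(1,2)] by blast
qed

definition reverse_complement :: "(int \<Rightarrow> int option) \<Rightarrow> int \<Rightarrow> int option" where
  "reverse_complement w t = map_option uminus (w (- t))"

lemma reverse_complement_involution: "reverse_complement (reverse_complement w) = w"
  by (rule ext) (simp add: reverse_complement_def option.map_comp o_def option.map_ident)

lemma in_dom_reverse_complement: "t \<in> dom (reverse_complement w) \<longleftrightarrow> - t \<in> dom w"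
  by (simp add: reverse_complement_def dom_def)

lemma ex1_involution_iff:
  assumes "\<And>x. f (f x) = x"
  shows "(\<exists>!x. P (f x)) \<longleftrightarrow> (\<exists>!x. P x)"
  by (metis assms)

lemma partial_perm_reverse_complement:
  assumes "partial_perm n w"
  shows "partial_perm n (reverse_complement w)"
proof -
  have shift: "w (- t) = map_option (\<lambda>v. v + n) (w (- (t + n)))" for t
    using partial_perm_add_period[OF assms, of "- (t + n)"] by simp
  have "inj_on (reverse_complement w) (dom (reverse_complement w))"
  proof (rule inj_onI)
    fix x y
    assume "x \<in> dom (reverse_complement w)" "y \<in> dom (reverse_complement w)"
      and "reverse_complement w x = reverse_complement w y"
    moreover have "w (- z) = map_option uminus (reverse_complement w z)" for z
      by (simp add: reverse_complement_def option.map_comp o_def option.map_ident)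
    ultimately have "- x \<in> dom w" "- y \<in> dom w" "w (- x) = w (- y)"
      unfolding in_dom_reverse_complement by simp_all
    then show "x = y"
      using assms unfolding partial_perm_def by (auto dest: inj_onD)
  qed
  moreover have "x \<in> dom (reverse_complement w) \<longleftrightarrow> x + n \<in> dom (reverse_complement w)" for x
  proof -
    have "- (x + n) \<in> dom w \<longleftrightarrow> - (x + n) + n \<in> dom w"
      using assms unfolding partial_perm_def by blast
    then show ?thesis
      unfolding in_dom_reverse_complement by simp
  qed
  moreover have "reverse_complement w (t + n) = Some (v + n)"
    if "reverse_complement w t = Some v" for t v
    using that shift[of t] unfolding reverse_complement_def
    by (cases "w (- (t + n))") auto
  ultimately show ?thesis
    unfolding partial_perm_def by blast
qed

lemma right_descents_reverse_complement:
  assumes "partial_perm n w"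
  shows "t mod n \<in> right_descents n (reverse_complement w) \<longleftrightarrow>
    (- t - 1) mod n \<in> right_descents n w"
  unfolding right_descents_iff[OF partial_perm_reverse_complement[OF assms]]
    right_descents_iff[OF assms]
  by (auto simp: reverse_complement_def)

lemma uminus_mod_eq_iff: "(- x) mod n = y mod n \<longleftrightarrow> x mod n = (- y) mod (n::int)"
  by (metis mod_minus_eq minus_minus)

lemma knuth_move_reverse_complement:
  assumes "knuth_move n w w' j"
  shows "knuth_move n (reverse_complement w) (reverse_complement w') (- j - 1)"
proof -
  have swap: "w' s = w (s + 1)" "w' (s + 1) = w s" if "s mod n = j mod n" for s
    using assms that unfolding knuth_move_def by blast+
  have fixed: "w' s = w s" if "s mod n \<noteq> j mod n" "s mod n \<noteq> (j + 1) mod n" for s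
    using assms that unfolding knuth_move_def by blast
  have "reverse_complement w' t = reverse_complement w (t + 1) \<and>
      reverse_complement w' (t + 1) = reverse_complement w t"
    if "t mod n = (- j - 1) mod n" for t
  proof -
    have "(t + 1) mod n = (- j) mod n"
      using that mod_add_cancel_right[of t 1 n "- j - 1"] by simp
    then have "(- t - 1) mod n = j mod n"
      using uminus_mod_eq_iff[of "t + 1" n j] by simp
    from swap[OF this] show ?thesis
      unfolding reverse_complement_def by simp
  qed
  moreover have "reverse_complement w' t = reverse_complement w t"
    if "t mod n \<noteq> (- j - 1) mod n" "t mod n \<noteq> (- j - 1 + 1) mod n" for t
    using that fixed[of "- t"] uminus_mod_eq_iff[of t n j] uminus_mod_eq_iff[of t n "j + 1"]
    unfolding reverse_complement_def by simp
  moreover have "strictly_between (- b) (- a) (- c) \<longleftrightarrow> strictly_between a b c" for a b c :: int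
    unfolding strictly_between_def by auto
  ultimately show ?thesis
    using assms unfolding knuth_move_def reverse_complement_def
    by (fastforce simp: add.commute[of _ 1])
qed

lemma knuth_connected_reverse_complement_iff:
  "knuth_connected n (reverse_complement w) (reverse_complement w') \<longleftrightarrow> knuth_connected n w w'"
  using knuth_move_reverse_complement[of n "reverse_complement w" "reverse_complement w'"]
    knuth_move_reverse_complement[of n w w']
  unfolding knuth_connected_def reverse_complement_involution by blast

lemma partial_perm_reverse_complement_iff:
  "partial_perm n (reverse_complement w) \<longleftrightarrow> partial_perm n w"
  using partial_perm_reverse_complement reverse_complement_involution by metis

lemma ex1_knuth_connected_descent_left:
  assumes "n \<ge> 2" "partial_perm n w" "i \<in> dom w"
    and "(i + 1) mod n \<in> right_descents n w" "i mod n \<notin> right_descents n w"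
  shows "\<exists>!w'. partial_perm n w' \<and> knuth_connected n w w' \<and>
    i mod n \<in> right_descents n w' \<and> (i + 1) mod n \<notin> right_descents n w'"
proof -
  let ?i' = "- i - 2"
  have descents_rc: "?i' mod n \<in> right_descents n (reverse_complement v) \<longleftrightarrow>
        (i + 1) mod n \<in> right_descents n v"
      "(?i' + 1) mod n \<in> right_descents n (reverse_complement v) \<longleftrightarrow>
        i mod n \<in> right_descents n v"
    if "partial_perm n v" for v
    using right_descents_reverse_complement[OF that, of ?i']
      right_descents_reverse_complement[OF that, of "?i' + 1"] by (simp_all add: add.commute[of 1 i])
  have "\<exists>!v. partial_perm n v \<and> knuth_connected n (reverse_complement w) v \<and>
      (?i' + 1) mod n \<in> right_descents n v \<and> ?i' mod n \<notin> right_descents n v"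
    using assms descents_rc[OF assms(2)] partial_perm_reverse_complement[OF assms(2)]
    by (intro ex1_knuth_connected_descent_right) (auto simp: in_dom_reverse_complement)
  then have "\<exists>!w'. partial_perm n (reverse_complement w') \<and>
      knuth_connected n (reverse_complement w) (reverse_complement w') \<and>
      (?i' + 1) mod n \<in> right_descents n (reverse_complement w') \<and>
      ?i' mod n \<notin> right_descents n (reverse_complement w')"
    by (subst ex1_involution_iff[where f = reverse_complement]) (rule reverse_complement_involution)
  then show ?thesis
    unfolding partial_perm_reverse_complement_iff knuth_connected_reverse_complement_iff
    using descents_rc by (metis (no_types, lifting))
qed

theorem proposition3p8:
  fixes n i :: int and w :: "int \<Rightarrow> int option"
  assumes "n \<ge> 1"
    and "partial_perm n w"
    and "i \<in> dom w" and "i + 1 \<in> dom w" and "i + 2 \<in> dom w"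
    and "(i mod n \<in> right_descents n w) \<noteq> ((i + 1) mod n \<in> right_descents n w)"
  shows "(i mod n \<in> right_descents n w \<longrightarrow>
            (\<exists>!w'. partial_perm n w' \<and> knuth_connected n w w' \<and>
                 (i + 1) mod n \<in> right_descents n w' \<and> i mod n \<notin> right_descents n w')) \<and>
         ((i + 1) mod n \<in> right_descents n w \<longrightarrow>
            (\<exists>!w'. partial_perm n w' \<and> knuth_connected n w w' \<and>
                 i mod n \<in> right_descents n w' \<and> (i + 1) mod n \<notin> right_descents n w'))"
proof -
  have "n \<noteq> 1"
    using assms(6) by auto
  with assms(1) have "n \<ge> 2" by simp
  then show ?thesis
    using assms ex1_knuth_connected_descent_right ex1_knuth_connected_descent_left by blast
qed

end
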